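(* There exist an absolute constant $C>0$ and an integer $n_0$ such that for all $0<b<B\le1$ and every $n\ge n_0$ there is an instance $\langle A,f,c\rangle$ with $|A|=n$, $f$ subadditive, and $p(\{i\})\le b$ for all $i\in A$, such that $$\frac{\textsc{Max-Reward}(B)}{\textsc{Max-Reward}(b)}\ge C\sqrt n.$$
   Context: An instance $\langle A,f,c\rangle$ consists of a finite set $A$ of agents, a monotone nondecreasing $f:2^A\to[0,1]$, and costs $c_i\ge0$. For $S\subseteq A$, $i\in S$: $f_S(i)=f(S)-f(S\setminus\{i\})$; $p(S)=\sum_{i\in S}c_i/f_S(i)$ (conventions: $0$ if $c_i=0=f_S(i)$, $\infty$ if $c_i>0=f_S(i)$). $f$ is subadditive if $f(S\cup S')\le f(S)+f(S')$ for all $S,S'\subseteq A$. $\textsc{Max-Reward}(B)=\max\{f(S):S\subseteq A,\ p(S)\le B\}$. *)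

theory Defs
  imports Complex_Main "HOL-Library.Extended_Real"
begin

definition marg :: "('a set \<Rightarrow> real) \<Rightarrow> 'a set \<Rightarrow> 'a \<Rightarrow> real" where
  "marg f S i = f S - f (S - {i})"

definition pay :: "('a set \<Rightarrow> real) \<Rightarrow> ('a \<Rightarrow> real) \<Rightarrow> 'a set \<Rightarrow> ereal" where
  "pay f c S = (\<Sum>i\<in>S. if marg f S i = 0 then (if c i = 0 then 0 else \<infinity>)
                        else ereal (c i / marg f S i))"

definition is_instance :: "'a set \<Rightarrow> ('a set \<Rightarrow> real) \<Rightarrow> ('a \<Rightarrow> real) \<Rightarrow> bool" where
  "is_instance A f c \<longleftrightarrow> finite A
     \<and> (\<forall>S. S \<subseteq> A \<longrightarrow> 0 \<le> f S \<and> f S \<le> 1)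
     \<and> (\<forall>S T. S \<subseteq> T \<and> T \<subseteq> A \<longrightarrow> f S \<le> f T)
     \<and> (\<forall>i\<in>A. 0 \<le> c i)"

definition subadditive_on :: "'a set \<Rightarrow> ('a set \<Rightarrow> real) \<Rightarrow> bool" where
  "subadditive_on A f \<longleftrightarrow> (\<forall>S T. S \<subseteq> A \<longrightarrow> T \<subseteq> A \<longrightarrow> f (S \<union> T) \<le> f S + f T)"

definition max_reward :: "'a set \<Rightarrow> ('a set \<Rightarrow> real) \<Rightarrow> ('a \<Rightarrow> real) \<Rightarrow> real \<Rightarrow> real" where
  "max_reward A f c B = Max {f S | S. S \<subseteq> A \<and> pay f c S \<le> ereal B}"

end

theory Submission
  imports Defs
begin

text \<open>The hard reward function has value 0 on the empty set, jumps to \<open>1/\<surd>n\<close> on one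
  agent, then grows linearly with slope \<open>a \<approx> 1/n\<close> and jumps to 1 only on the full set of
  \<open>n\<close> agents. So the marginal contribution of an agent is \<open>1/\<surd>n\<close> in a singleton and in the full
  set, but only \<open>a\<close> in every intermediate set. With uniform cost \<open>c = P/(n\<surd>n)\<close> a singleton
  costs \<open>P/n \<le> b\<close> and the full set costs exactly \<open>P \<le> B\<close>, earning reward 1; a set of
  \<open>k\<close> agents in between costs \<open>k c / a\<close>, so the budget \<open>b < P\<close> only affords \<open>k < n \<surd>n a\<close> agents
  and thus reward \<open>O(1/\<surd>n)\<close>.\<close>

lemma pay_uniform_marg:
  assumes "finite S" "\<And>i. i \<in> S \<Longrightarrow> marg f S i = d" "d \<noteq> 0"
  shows "pay f (\<lambda>_. c) S = ereal (real (card S) * (c / d))"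
proof -
  have "pay f (\<lambda>_. c) S = (\<Sum>i\<in>S. ereal (c / d))"
    unfolding pay_def using assms(2,3) by (intro sum.cong) auto
  also have "\<dots> = ereal (real (card S) * (c / d))"
    by simp
  finally show ?thesis .
qed

lemma pay_empty [simp]: "pay f c {} = 0"
  by (simp add: pay_def)

lemma finite_rewards: "finite A \<Longrightarrow> finite {f S | S. S \<subseteq> A \<and> pay f c S \<le> ereal B}"
  by (rule finite_subset[of _ "f ` Pow A"]) auto

lemma max_reward_ge:
  assumes "finite A" "S \<subseteq> A" "pay f c S \<le> ereal B"
  shows "f S \<le> max_reward A f c B"
  unfolding max_reward_def using assms by (intro Max_ge finite_rewards) auto

lemma max_reward_le:
  assumes "finite A" "0 \<le> B" "\<And>S. S \<subseteq> A \<Longrightarrow> pay f c S \<le> ereal B \<Longrightarrow> f S \<le> r"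
  shows "max_reward A f c B \<le> r"
proof -
  have "f {} \<in> {f S | S. S \<subseteq> A \<and> pay f c S \<le> ereal B}"
    using assms(2) by auto
  then show ?thesis
    unfolding max_reward_def using assms(1,3)
    by (subst Max_le_iff) (auto intro: finite_rewards)
qed

definition slope :: "nat \<Rightarrow> real" where
  "slope n = (1 - 2 / sqrt (real n)) / (real n - 2)"

definition hard_reward :: "nat \<Rightarrow> nat set \<Rightarrow> real" where
  "hard_reward n S = (if S = {0..<n} then 1 else if S = {} then 0
      else 1 / sqrt (real n) + (real (card S) - 1) * slope n)"

locale large_agent_set =
  fixes n :: nat
  assumes n_ge_16: "16 \<le> n"
begin

abbreviation "s \<equiv> sqrt (real n)"
abbreviation "a \<equiv> slope n"
abbreviation "agents \<equiv> {0..<n}"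
abbreviation "rew \<equiv> hard_reward n"

lemma s_ge_4: "4 \<le> s"
  using real_sqrt_le_mono[of 16 "real n"] n_ge_16 by simp

lemma s_pos: "0 < s"
  using s_ge_4 by linarith

lemma slope_pos: "0 < a"
  unfolding slope_def using s_ge_4 n_ge_16 by (simp add: field_simps)

lemma slope_full: "(real n - 2) * a = 1 - 2 / s"
  unfolding slope_def using n_ge_16 by simp

lemma slope_le_inv_sqrt: "a \<le> 1 / s"
proof -
  have "4 * s \<le> s * s"
    using s_ge_4 by (intro mult_right_mono) auto
  then have "s \<le> real n - 2"
    using s_ge_4 n_ge_16 by simp
  then have "a * s \<le> (real n - 2) * a"
    using slope_pos by (simp add: mult.commute)
  also have "\<dots> \<le> 1"
    using slope_full s_pos by simp
  finally show ?thesis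
    using s_pos by (simp add: field_simps)
qed

lemma slope_sq_bound: "real n * s * a * a \<le> 2 / s"
proof -
  have "real n * a \<le> real n / (real n - 2)"
    unfolding slope_def using n_ge_16 s_pos by (simp add: field_simps)
  also have "\<dots> \<le> 8 / 7"
    using n_ge_16 by (simp add: field_simps)
  finally have "(real n * a) * (real n * a) \<le> (8 / 7) * (8 / 7)"
    using slope_pos by (intro mult_mono) auto
  moreover have "real n * s * a * a * s = (real n * a) * (real n * a)"
    by (simp add: algebra_simps)
  ultimately have "real n * s * a * a * s \<le> 2"
    by linarith
  then show ?thesis
    using s_pos by (simp add: field_simps)
qed

lemma card_proper_subset: "S \<subseteq> agents \<Longrightarrow> S \<noteq> agents \<Longrightarrow> card S < n"
  using psubset_card_mono[of agents S] by auto

lemma singleton_ne_agents: "{i} \<noteq> agents"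
proof
  assume "{i} = agents"
  then have "card {i} = n"
    by simp
  then show False
    using n_ge_16 by simp
qed

lemma hard_reward_agents [simp]: "rew agents = 1"
  by (simp add: hard_reward_def)

lemma hard_reward_empty [simp]: "rew {} = 0"
  using n_ge_16 by (auto simp: hard_reward_def)

lemma hard_reward_proper:
  "S \<noteq> agents \<Longrightarrow> S \<noteq> {} \<Longrightarrow> rew S = 1 / s + (real (card S) - 1) * a"
  by (simp add: hard_reward_def)

lemma hard_reward_singleton [simp]: "rew {i} = 1 / s"
  using hard_reward_proper[OF singleton_ne_agents] by simp

lemma hard_reward_bounds:
  assumes "S \<subseteq> agents"
  shows "0 \<le> rew S" "rew S \<le> 1"
proof -
  have "0 \<le> rew S \<and> rew S \<le> 1"
  proof (cases "S = agents \<or> S = {}")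
    case False
    have "finite S"
      using assms finite_subset by blast
    then have "0 < card S"
      using False card_gt_0_iff by blast
    moreover have "card S < n"
      using False assms card_proper_subset by blast
    ultimately have "0 \<le> real (card S) - 1" "real (card S) - 1 \<le> real n - 2"
      by linarith+
    then have "0 \<le> (real (card S) - 1) * a" "(real (card S) - 1) * a \<le> 1 - 2 / s"
      using slope_pos slope_full mult_right_mono[of "real (card S) - 1" "real n - 2" a]
      by simp_all
    moreover have "0 \<le> 1 / s" "1 / s \<le> 2 / s"
      using s_pos by (simp_all add: divide_right_mono)
    ultimately show ?thesis
      using False hard_reward_proper[of S] by simp
  qed auto
  then show "0 \<le> rew S" "rew S \<le> 1" by auto
qed

lemma hard_reward_mono:
  assumes "S \<subseteq> T" "T \<subseteq> agents"
  shows "rew S \<le> rew T"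
proof -
  consider "T = agents" | "S = {}" | "S \<noteq> {}" "T \<noteq> agents" by blast
  then show ?thesis
  proof cases
    case 3
    have "card S \<le> card T"
      using assms by (meson card_mono finite_atLeastLessThan finite_subset)
    then have "(real (card S) - 1) * a \<le> (real (card T) - 1) * a"
      using slope_pos by (intro mult_right_mono) auto
    moreover have "S \<noteq> agents" "T \<noteq> {}"
      using 3 assms by blast+
    ultimately show ?thesis
      using 3 hard_reward_proper[of S] hard_reward_proper[of T] by simp
  next
    case 1
    then show ?thesis
      using assms hard_reward_bounds(2) by simp
  next
    case 2
    then show ?thesis
      using assms hard_reward_bounds(1) by simp
  qed
qed

lemma hard_reward_subadditive: "subadditive_on agents rew"
  unfolding subadditive_on_def
proof (intro allI impI)
  fix S T assume S: "S \<subseteq> agents" and T: "T \<subseteq> agents"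
  consider "S = {} \<or> T = {}" | "S = agents \<or> T = agents"
    | "S \<noteq> {}" "T \<noteq> {}" "S \<noteq> agents" "T \<noteq> agents" by blast
  then show "rew (S \<union> T) \<le> rew S + rew T"
  proof cases
    case 2
    then show ?thesis
      using S T hard_reward_bounds by (auto simp: Un_absorb1 Un_absorb2)
  next
    case 3
    have rew_S: "rew S = 1 / s + (real (card S) - 1) * a"
      and rew_T: "rew T = 1 / s + (real (card T) - 1) * a"
      using 3 hard_reward_proper by auto
    have card_Un: "card (S \<union> T) \<le> card S + card T"
      by (rule card_Un_le)
    show ?thesis
    proof (cases "S \<union> T = agents")
      case True
      then have "real n \<le> real (card S) + real (card T)"
        using card_Un by (metis card_atLeastLessThan diff_zero of_nat_add of_nat_le_iff)
      then have "(real n - 2) * a \<le> (real (card S) + real (card T) - 2) * a"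
        using slope_pos by (simp add: mult_right_mono)
      then show ?thesis
        using True rew_S rew_T slope_full by (simp add: algebra_simps)
    next
      case False
      have "(real (card (S \<union> T)) - 1) * a \<le> (real (card S) + real (card T) - 1) * a"
        using slope_pos card_Un by (simp add: mult_right_mono)
      then show ?thesis
        using False 3 rew_S rew_T slope_le_inv_sqrt hard_reward_proper[of "S \<union> T"]
        by (simp add: algebra_simps)
    qed
  qed auto
qed

lemma marg_hard_reward_agents:
  assumes "i \<in> agents"
  shows "marg rew agents i = 1 / s"
proof -
  have card: "card (agents - {i}) = n - 1"
    using assms by simp
  then have "card (agents - {i}) \<noteq> 0"
    using n_ge_16 by simp
  then have "agents - {i} \<noteq> {}"
    by auto
  moreover have "agents - {i} \<noteq> agents"
    using assms by blast
  moreover have "real (card (agents - {i})) - 1 = real n - 2"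
    using card n_ge_16 by (simp add: of_nat_diff)
  ultimately have "rew (agents - {i}) = 1 / s + (real n - 2) * a"
    using hard_reward_proper by simp
  then show ?thesis
    unfolding marg_def using slope_full by simp
qed

lemma marg_hard_reward_singleton: "marg rew {i} i = 1 / s"
  by (simp add: marg_def)

lemma marg_hard_reward_intermediate:
  assumes "S \<subseteq> agents" "S \<noteq> agents" "2 \<le> card S" "i \<in> S"
  shows "marg rew S i = a"
proof -
  have card: "card (S - {i}) = card S - 1"
    using assms(4) by simp
  then have "card (S - {i}) \<noteq> 0"
    using assms(3) by simp
  then have "S - {i} \<noteq> {}"
    by (metis card.empty)
  moreover have "real (card (S - {i})) - 1 = (real (card S) - 1) - 1"
    using card assms(3) by (simp add: of_nat_diff)
  moreover have "S - {i} \<noteq> agents" "S \<noteq> {}"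
    using assms by auto
  ultimately have "rew (S - {i}) = 1 / s + ((real (card S) - 1) - 1) * a"
    and "rew S = 1 / s + (real (card S) - 1) * a"
    using assms(2) hard_reward_proper by simp_all
  then show ?thesis
    unfolding marg_def by (simp add: algebra_simps)
qed

definition hard_cost :: "real \<Rightarrow> real" where
  "hard_cost P = P / (real n * s)"

lemma pay_agents: "pay rew (\<lambda>_. hard_cost P) agents = ereal P"
proof -
  have "pay rew (\<lambda>_. hard_cost P) agents = ereal (real n * (hard_cost P / (1 / s)))"
    using marg_hard_reward_agents s_pos by (subst pay_uniform_marg) auto
  also have "\<dots> = ereal P"
    unfolding hard_cost_def using n_ge_16 s_pos by simp
  finally show ?thesis .
qed

lemma pay_singleton: "pay rew (\<lambda>_. hard_cost P) {i} = ereal (P / real n)"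
proof -
  have "pay rew (\<lambda>_. hard_cost P) {i} = ereal (hard_cost P / (1 / s))"
    using marg_hard_reward_singleton s_pos by (subst pay_uniform_marg) auto
  also have "\<dots> = ereal (P / real n)"
    unfolding hard_cost_def using n_ge_16 s_pos by simp
  finally show ?thesis .
qed

lemma pay_intermediate:
  assumes "S \<subseteq> agents" "S \<noteq> agents" "2 \<le> card S"
  shows "pay rew (\<lambda>_. hard_cost P) S = ereal (real (card S) * (hard_cost P / a))"
  using assms marg_hard_reward_intermediate slope_pos
  by (intro pay_uniform_marg) (auto intro: finite_subset)

lemma low_budget_reward:
  assumes "0 < b" "b < P" "S \<subseteq> agents" "pay rew (\<lambda>_. hard_cost P) S \<le> ereal b"
  shows "rew S \<le> 3 / s"
proof -
  have "finite S"
    using assms(3) finite_subset by blast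
  then consider "S = {}" | "S = agents" | "card S = 1" | "S \<noteq> agents" "2 \<le> card S"
    by (metis One_nat_def card_0_eq less_2_cases not_le)
  then show ?thesis
  proof cases
    case 2
    then show ?thesis using assms pay_agents by simp
  next
    case 3
    then show ?thesis
      using s_pos by (auto simp: card_1_singleton_iff divide_right_mono)
  next
    case 4
    define k where "k = real (card S)"
    have "k * (hard_cost P / a) < real n * s * hard_cost P"
      using assms pay_intermediate[OF assms(3) 4] n_ge_16 s_pos
      unfolding k_def hard_cost_def by simp
    then have "k < real n * s * a"
      using slope_pos assms n_ge_16 s_pos unfolding hard_cost_def by (simp add: field_simps)
    have "rew S = 1 / s + (k - 1) * a"
      using 4 hard_reward_proper[of S] unfolding k_def by fastforce
    also have "\<dots> \<le> 1 / s + k * a"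
      using slope_pos by simp
    also have "\<dots> \<le> 1 / s + real n * s * a * a"
      using \<open>k < real n * s * a\<close> slope_pos by simp
    also have "\<dots> \<le> 3 / s"
      using slope_sq_bound by simp
    finally show ?thesis .
  qed (use s_pos in simp)
qed

theorem hard_instance:
  assumes "0 < b" "b < B" "B \<le> 1"
  shows "\<exists>(A::nat set) f c. is_instance A f c \<and> card A = n \<and> subadditive_on A f
           \<and> (\<forall>i\<in>A. pay f c {i} \<le> ereal b)
           \<and> max_reward A f c B / max_reward A f c b \<ge> 1 / 3 * s"
proof (intro exI conjI)
  define P where "P = min B (real n * b)"
  have P: "b < P" "P \<le> B" "P / real n \<le> b"
    unfolding P_def using assms n_ge_16 by (auto simp: field_simps)
  let ?c = "\<lambda>_. hard_cost P"
  show "is_instance agents rew ?c"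
    unfolding is_instance_def hard_cost_def using P assms hard_reward_bounds hard_reward_mono
    by auto
  show "subadditive_on agents rew"
    by (rule hard_reward_subadditive)
  show "\<forall>i\<in>agents. pay rew ?c {i} \<le> ereal b"
    using P pay_singleton by simp
  have max_B: "max_reward agents rew ?c B = 1"
    using max_reward_ge[of agents agents rew ?c B] max_reward_le[of agents B rew ?c 1]
      pay_agents P assms hard_reward_bounds by force
  define M where "M = max_reward agents rew ?c b"
  have "1 / s \<le> M"
    unfolding M_def using max_reward_ge[of agents "{0}" rew ?c b] pay_singleton P n_ge_16 by simp
  moreover have "M \<le> 3 / s"
    unfolding M_def using low_budget_reward P assms by (intro max_reward_le) auto
  ultimately have "0 < M" "s * M \<le> 3"
    using s_pos by (auto simp: field_simps intro: less_le_trans[of 0 "1 / s"])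
  then show "max_reward agents rew ?c B / max_reward agents rew ?c b \<ge> 1 / 3 * s"
    unfolding max_B M_def[symmetric] by (simp add: field_simps)
qed (simp)

end

theorem mainTheorem15:
  shows "\<exists>C::real. C > 0 \<and> (\<exists>n0::nat. \<forall>b B::real. \<forall>n::nat.
           0 < b \<and> b < B \<and> B \<le> 1 \<and> n \<ge> n0 \<longrightarrow>
           (\<exists>(A::nat set) f c. is_instance A f c \<and> card A = n \<and> subadditive_on A f
              \<and> (\<forall>i\<in>A. pay f c {i} \<le> ereal b)
              \<and> max_reward A f c B / max_reward A f c b \<ge> C * sqrt (real n)))"
  using large_agent_set.hard_instance large_agent_set_def
  by (intro exI[of _ "1/3"] conjI exI[of _ 16]) auto

end
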